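(* Let $X$ be a finite connected poset and $\theta\in\mathcal{M}(X)$. Then $\theta\in\mathcal{AM}(X)$ if and only if $s^+_{\theta,\Gamma}(z)-s^-_{\theta,\Gamma}(z)=t^+_{\theta,\Gamma}(z)-t^-_{\theta,\Gamma}(z)$ holds for every $z\in X$ and every weak crown $\Gamma$ in $X$, i.e. every closed semiwalk $\Gamma: x_1<y_1>x_2<y_2>\dots>x_n<y_n>x_1$ with $n\ge2$ and $x_1,\dots,x_n,y_1,\dots,y_n$ pairwise distinct.
   Context: For $x<y$, $e_{xy}$ denotes the incidence-algebra basis element and $B=\{e_{xy}:x<y\}$. For a bijection $\theta:B\to B$ and a maximal chain $C:u_1<\dots<u_k$, $\theta$ is increasing on $C$ if there is a maximal chain $D:v_1<\dots<v_k$ with $\theta(e_{u_iu_j})=e_{v_iv_j}$ for all $i<j$, decreasing if $\theta(e_{u_iu_j})=e_{v_{k-j+1}v_{k-i+1}}$ for all $i<j$. $\mathcal{M}(X)$ is the set of bijections $B\to B$ increasing or decreasing on every maximal chain. A semiwalk is a sequence $u_0,\dots,u_m$ with $u_i<u_{i+1}$ or $u_i>u_{i+1}$ for each $i$; a walk is a semiwalk in which one of $u_i,u_{i+1}$ covers the other for each $i$; closed if $u_0=u_m$. For a closed semiwalk $\Gamma:u_0,\dots,u_m=u_0$ and $z\in X$: $s^+_{\theta,\Gamma}(z)=|\{i: u_i<u_{i+1},\ \exists w>z,\ \theta(e_{zw})=e_{u_iu_{i+1}}\}|$, $s^-_{\theta,\Gamma}(z)=|\{i: u_i>u_{i+1},\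 \exists w>z,\ \theta(e_{zw})=e_{u_{i+1}u_i}\}|$, $t^+_{\theta,\Gamma}(z)=|\{i: u_i<u_{i+1},\ \exists w<z,\ \theta(e_{wz})=e_{u_iu_{i+1}}\}|$, $t^-_{\theta,\Gamma}(z)=|\{i: u_i>u_{i+1},\ \exists w<z,\ \theta(e_{wz})=e_{u_{i+1}u_i}\}|$, $0\le i\le m-1$. $\theta$ is admissible if $s^+-s^-=t^+-t^-$ at every $z$ for every closed walk; $\mathcal{AM}(X)$ is the set of admissible elements of $\mathcal{M}(X)$. A weak $n$-crown is a poset on distinct $x_1,\dots,x_n,y_1,\dots,y_n$ with $x_i<y_i$, $x_{i+1}<y_i$ ($i<n$) and $x_1<y_n$ (further comparabilities allowed). *)

theory Defs
  imports Main
begin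

text \<open>A poset is a carrier set X :: 'a set with the order inherited from the type class
  order on 'a.  The basis element e_xy (x < y) is represented by the pair (x, y);
  B = {(x,y). x,y in X, x < y}.\<close>

definition basis :: "'a::order set \<Rightarrow> ('a \<times> 'a) set" where
  "basis X = {(x, y). x \<in> X \<and> y \<in> X \<and> x < y}"

definition is_chain :: "'a::order set \<Rightarrow> 'a set \<Rightarrow> bool" where
  "is_chain X C \<longleftrightarrow> C \<subseteq> X \<and> (\<forall>x\<in>C. \<forall>y\<in>C. x \<le> y \<or> y \<le> x)"

definition maximal_chain :: "'a::order set \<Rightarrow> 'a set \<Rightarrow> bool" where
  "maximal_chain X C \<longleftrightarrow> is_chain X C \<and> (\<forall>D. is_chain X D \<and> C \<subseteq> D \<longrightarrow> D = C)"

text \<open>A maximal chain written as its strictly increasing list u_1 < ... < u_k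
  (indices shifted to start at 0).\<close>
definition max_chain_list :: "'a::order set \<Rightarrow> 'a list \<Rightarrow> bool" where
  "max_chain_list X us \<longleftrightarrow> sorted_wrt (<) us \<and> maximal_chain X (set us)"

definition increasing_on ::
  "'a::order set \<Rightarrow> ('a \<times> 'a \<Rightarrow> 'a \<times> 'a) \<Rightarrow> 'a list \<Rightarrow> bool" where
  "increasing_on X \<theta> us \<longleftrightarrow>
     (\<exists>vs. max_chain_list X vs \<and> length vs = length us \<and>
        (\<forall>i j. i < j \<and> j < length us \<longrightarrow> \<theta> (us ! i, us ! j) = (vs ! i, vs ! j)))"

definition decreasing_on ::
  "'a::order set \<Rightarrow> ('a \<times> 'a \<Rightarrow> 'a \<times> 'a) \<Rightarrow> 'a list \<Rightarrow> bool" where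
  "decreasing_on X \<theta> us \<longleftrightarrow>
     (\<exists>vs. max_chain_list X vs \<and> length vs = length us \<and>
        (\<forall>i j. i < j \<and> j < length us \<longrightarrow>
           \<theta> (us ! i, us ! j) = (vs ! (length us - 1 - j), vs ! (length us - 1 - i))))"

definition M_set :: "'a::order set \<Rightarrow> ('a \<times> 'a \<Rightarrow> 'a \<times> 'a) set" where
  "M_set X = {\<theta>. bij_betw \<theta> (basis X) (basis X) \<and>
     (\<forall>us. max_chain_list X us \<longrightarrow> increasing_on X \<theta> us \<or> decreasing_on X \<theta> us)}"

definition covers :: "'a::order set \<Rightarrow> 'a \<Rightarrow> 'a \<Rightarrow> bool" where
  "covers X x y \<longleftrightarrow> x \<in> X \<and> y \<in> X \<and> x < y \<and> \<not> (\<exists>z\<in>X. x < z \<and> z < y)"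

definition semiwalk :: "'a::order set \<Rightarrow> 'a list \<Rightarrow> bool" where
  "semiwalk X us \<longleftrightarrow> us \<noteq> [] \<and> set us \<subseteq> X \<and>
     (\<forall>i. Suc i < length us \<longrightarrow> us ! i < us ! Suc i \<or> us ! Suc i < us ! i)"

definition walk :: "'a::order set \<Rightarrow> 'a list \<Rightarrow> bool" where
  "walk X us \<longleftrightarrow> semiwalk X us \<and>
     (\<forall>i. Suc i < length us \<longrightarrow> covers X (us ! i) (us ! Suc i) \<or> covers X (us ! Suc i) (us ! i))"

definition closed_walk :: "'a list \<Rightarrow> bool" where
  "closed_walk us \<longleftrightarrow> us \<noteq> [] \<and> hd us = last us"

definition poset_connected :: "'a::order set \<Rightarrow> bool" where
  "poset_connected X \<longleftrightarrow>
     (\<forall>x\<in>X. \<forall>y\<in>X. \<exists>us. semiwalk X us \<and> hd us = x \<and> last us = y)"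

text \<open>The counting functions; indices i range over 0 <= i <= m-1 where m+1 = length us.\<close>
definition s_plus :: "'a::order set \<Rightarrow> ('a \<times> 'a \<Rightarrow> 'a \<times> 'a) \<Rightarrow> 'a list \<Rightarrow> 'a \<Rightarrow> nat" where
  "s_plus X \<theta> us z = card {i. Suc i < length us \<and> us ! i < us ! Suc i \<and>
      (\<exists>w\<in>X. z < w \<and> \<theta> (z, w) = (us ! i, us ! Suc i))}"

definition s_minus :: "'a::order set \<Rightarrow> ('a \<times> 'a \<Rightarrow> 'a \<times> 'a) \<Rightarrow> 'a list \<Rightarrow> 'a \<Rightarrow> nat" where
  "s_minus X \<theta> us z = card {i. Suc i < length us \<and> us ! Suc i < us ! i \<and>
      (\<exists>w\<in>X. z < w \<and> \<theta> (z, w) = (us ! Suc i, us ! i))}"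

definition t_plus :: "'a::order set \<Rightarrow> ('a \<times> 'a \<Rightarrow> 'a \<times> 'a) \<Rightarrow> 'a list \<Rightarrow> 'a \<Rightarrow> nat" where
  "t_plus X \<theta> us z = card {i. Suc i < length us \<and> us ! i < us ! Suc i \<and>
      (\<exists>w\<in>X. w < z \<and> \<theta> (w, z) = (us ! i, us ! Suc i))}"

definition t_minus :: "'a::order set \<Rightarrow> ('a \<times> 'a \<Rightarrow> 'a \<times> 'a) \<Rightarrow> 'a list \<Rightarrow> 'a \<Rightarrow> nat" where
  "t_minus X \<theta> us z = card {i. Suc i < length us \<and> us ! Suc i < us ! i \<and>
      (\<exists>w\<in>X. w < z \<and> \<theta> (w, z) = (us ! Suc i, us ! i))}"

definition balanced_at ::
  "'a::order set \<Rightarrow> ('a \<times> 'a \<Rightarrow> 'a \<times> 'a) \<Rightarrow> 'a list \<Rightarrow> 'a \<Rightarrow> bool" where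
  "balanced_at X \<theta> us z \<longleftrightarrow>
     int (s_plus X \<theta> us z) - int (s_minus X \<theta> us z) =
     int (t_plus X \<theta> us z) - int (t_minus X \<theta> us z)"

definition admissible :: "'a::order set \<Rightarrow> ('a \<times> 'a \<Rightarrow> 'a \<times> 'a) \<Rightarrow> bool" where
  "admissible X \<theta> \<longleftrightarrow>
     (\<forall>us z. walk X us \<and> closed_walk us \<and> z \<in> X \<longrightarrow> balanced_at X \<theta> us z)"

definition AM_set :: "'a::order set \<Rightarrow> ('a \<times> 'a \<Rightarrow> 'a \<times> 'a) set" where
  "AM_set X = {\<theta> \<in> M_set X. admissible X \<theta>}"

text \<open>A weak crown in X: the closed semiwalk x_1 < y_1 > x_2 < y_2 > ... > x_n < y_n > x_1
  with n >= 2 and all x_i, y_i pairwise distinct (0-indexed lists xs, ys).\<close>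
definition crown_list :: "'a list \<Rightarrow> 'a list \<Rightarrow> 'a list" where
  "crown_list xs ys = concat (map (\<lambda>i. [xs ! i, ys ! i]) [0..<length xs]) @ [xs ! 0]"

definition weak_crown :: "'a::order set \<Rightarrow> 'a list \<Rightarrow> 'a list \<Rightarrow> bool" where
  "weak_crown X xs ys \<longleftrightarrow>
     length xs = length ys \<and> length xs \<ge> 2 \<and> distinct (xs @ ys) \<and>
     set xs \<subseteq> X \<and> set ys \<subseteq> X \<and>
     (\<forall>i < length xs. xs ! i < ys ! i) \<and>
     (\<forall>i. Suc i < length xs \<longrightarrow> xs ! Suc i < ys ! i) \<and>
     xs ! 0 < ys ! (length xs - 1)"

end

theory Submission
  imports Defs
begin

(*
  Fix z and let q be the theta-preimage of a basis element p.  A step of a semiwalk that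
  traverses p upwards changes (s+ - s-) - (t+ - t-) at z by [fst q = z] - [snd q = z], a
  downward step by the negative of this.  So balancedness at z says that an antisymmetric
  edge weight sums to zero around the closed semiwalk.

  An injective self-map of a finite family is onto, so the pair set of every maximal chain is
  the theta-image of the pair set of a maximal chain, on which theta is increasing or
  decreasing.  Hence for a < b < c the preimages of (a,b), (b,c), (a,c) are (u,v), (v,w),
  (u,w) for some u < v < w, up to swapping the first two, and the weight is additive along
  chains.  Additivity lets one refine each
  comparability step into a saturated chain without changing the weight sum, which turns
  closed semiwalks into closed walks, and lets one shortcut a monotone triple a < b < c (or
  a > b > c) of a closed semiwalk to a, c.  Splitting at repeated vertices and shortcutting,
  also across the closing point, reduce every closed semiwalk to closed semiwalks that
  alternate up and down without repetitions, that is, to weak crowns.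
*)

section \<open>Weight sums along lists\<close>

fun edge_sum :: "('a \<Rightarrow> 'a \<Rightarrow> 'b::comm_monoid_add) \<Rightarrow> 'a list \<Rightarrow> 'b" where
  "edge_sum f (a # b # xs) = f a b + edge_sum f (b # xs)"
| "edge_sum f _ = 0"

lemma edge_sum_append:
  "edge_sum f (xs @ y # ys) = edge_sum f (xs @ [y]) + edge_sum f (y # ys)"
  by (induction xs rule: induct_list012) (auto simp: add.assoc)

lemma edge_sum_snoc: "xs \<noteq> [] \<Longrightarrow> edge_sum f (xs @ [y]) = edge_sum f xs + f (last xs) y"
  by (induction xs rule: induct_list012) (auto simp: add.assoc)

lemma edge_sum_conv_sum: "edge_sum f xs = (\<Sum>i<length xs - 1. f (xs ! i) (xs ! Suc i))"
proof (induction xs rule: induct_list012)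
  case (3 a b xs)
  then show ?case
    by (simp add: sum.lessThan_Suc_shift[where n = "length xs"] del: sum.lessThan_Suc)
qed auto

lemma edge_sum_rev:
  fixes f :: "'a \<Rightarrow> 'a \<Rightarrow> 'b::ab_group_add"
  assumes "\<And>a b. f b a = - f a b"
  shows "edge_sum f (rev xs) = - edge_sum f xs"
proof (induction xs rule: induct_list012)
  case (3 a b xs)
  then show ?case
    using edge_sum_append[of f "rev xs" b "[a]"] assms[of a b] by simp
qed auto

lemma edge_sum_split_cycle:
  "edge_sum f (xs @ y # ys @ y # zs) = edge_sum f (xs @ y # zs) + edge_sum f (y # ys @ [y])"
  using edge_sum_append[of f xs y "ys @ y # zs"] edge_sum_append[of f "y # ys" y zs]
    edge_sum_append[of f xs y zs]
  by (simp add: ac_simps)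

lemma edge_sum_glue:
  assumes "xs \<noteq> []" "ys \<noteq> []" "last xs = hd ys"
  shows "edge_sum f (xs @ tl ys) = edge_sum f xs + edge_sum f ys"
proof -
  obtain xs' where "xs = xs' @ [hd ys]"
    using assms by (metis append_butlast_last_id)
  moreover have "ys = hd ys # tl ys"
    using assms(2) by simp
  ultimately show ?thesis
    using edge_sum_append[of f xs' "hd ys" "tl ys"] by simp
qed

lemma successively_glue:
  assumes "successively R xs" "successively R ys" "xs \<noteq> []" "ys \<noteq> []" "last xs = hd ys"
  shows "successively R (xs @ tl ys)"
  using assms by (cases ys) (auto simp: successively_append_iff successively_Cons)

section \<open>Maximal chains\<close>

lemma sorted_wrt_less_distinct: "sorted_wrt (<) (vs :: 'a::order list) \<Longrightarrow> distinct vs"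
  by (induction vs) auto

lemma sorted_wrt_less_index_less:
  fixes vs :: "'a::order list"
  assumes "sorted_wrt (<) vs" "i < length vs" "j < length vs" "vs ! i < vs ! j"
  shows "i < j"
proof -
  have "\<not> j < i"
    using sorted_wrt_nth_less[OF assms(1), of j i] assms(2-4) by (metis order.asym)
  moreover have "i \<noteq> j"
    using assms(4) by auto
  ultimately show ?thesis
    by linarith
qed

lemma finite_chain_sorted_list:
  fixes C :: "'a::order set"
  assumes "finite C" and "\<forall>x\<in>C. \<forall>y\<in>C. x \<le> y \<or> y \<le> x"
  shows "\<exists>vs. sorted_wrt (<) vs \<and> set vs = C"
  using assms
proof (induction C rule: finite_remove_induct)
  case (remove C)
  obtain m where m: "m \<in> C" "\<forall>b\<in>C. m \<le> b \<longrightarrow> m = b"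
    using finite_has_maximal[OF remove(1,2)] by blast
  have below: "\<forall>b \<in> C - {m}. b < m"
    using remove.prems m by (auto simp: less_le)
  obtain vs where "sorted_wrt (<) vs" "set vs = C - {m}"
    using remove.IH[OF m(1)] remove.prems by blast
  then have "sorted_wrt (<) (vs @ [m]) \<and> set (vs @ [m]) = C"
    using below m(1) by (auto simp: sorted_wrt_append)
  then show ?case ..
qed simp

lemma max_chain_list_extends:
  assumes "finite X" and "is_chain X C"
  shows "\<exists>vs. max_chain_list X vs \<and> C \<subseteq> set vs"
proof -
  let ?S = "{D. is_chain X D \<and> C \<subseteq> D}"
  have "finite ?S"
    using \<open>finite X\<close> by (intro finite_subset[of ?S "Pow X"]) (auto simp: is_chain_def)
  then obtain D where D: "is_chain X D" "C \<subseteq> D" and maximal: "\<forall>E\<in>?S. D \<subseteq> E \<longrightarrow> D = E"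
    using finite_has_maximal[of ?S] assms(2) by blast
  then have "maximal_chain X D"
    unfolding maximal_chain_def by blast
  moreover obtain vs where "sorted_wrt (<) vs" "set vs = D"
    using finite_chain_sorted_list[of D] D(1) \<open>finite X\<close>
    unfolding is_chain_def by (meson finite_subset)
  ultimately show ?thesis
    using D(2) by (auto simp: max_chain_list_def)
qed

lemma max_chain_list_covers:
  assumes "max_chain_list X vs"
  shows "successively (covers X) vs"
  unfolding successively_conv_nth
proof (intro allI impI)
  fix k assume k: "Suc k < length vs"
  have sorted: "sorted_wrt (<) vs" and chain: "is_chain X (set vs)"
    and maximal: "\<And>D. is_chain X D \<Longrightarrow> set vs \<subseteq> D \<Longrightarrow> D = set vs"
    using assms by (auto simp: max_chain_list_def maximal_chain_def)
  have less: "vs ! k < vs ! Suc k"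
    using sorted_wrt_nth_less[OF sorted, of k "Suc k"] k by simp
  have "\<not> (vs ! k < u \<and> u < vs ! Suc k)" if "u \<in> X" for u
  proof
    assume between: "vs ! k < u \<and> u < vs ! Suc k"
    have comparable: "v < u \<or> u < v" if "v \<in> set vs" for v
    proof -
      obtain j where j: "j < length vs" "v = vs ! j"
        using \<open>v \<in> set vs\<close> by (auto simp: in_set_conv_nth)
      show ?thesis
      proof (cases "j \<le> k")
        case True
        then have "v \<le> vs ! k"
          using j sorted_wrt_nth_less[OF sorted, of j k] k by (cases "j = k") auto
        then show ?thesis using between by auto
      next
        case False
        then have "vs ! Suc k \<le> v"
          using j sorted_wrt_nth_less[OF sorted, of "Suc k" j] by (cases "j = Suc k") auto
        then show ?thesis using between by auto
      qed
    qed
    then have "is_chain X (insert u (set vs))"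
      using chain \<open>u \<in> X\<close> unfolding is_chain_def by (blast intro: less_imp_le)
    then have "u \<in> set vs"
      using maximal by blast
    then show False
      using comparable by blast
  qed
  then show "covers X (vs ! k) (vs ! Suc k)"
    using chain k less by (auto simp: covers_def is_chain_def)
qed

section \<open>Closed semiwalks and weak crowns\<close>

lemma semiwalk_iff_successively:
  "semiwalk X xs \<longleftrightarrow> xs \<noteq> [] \<and> set xs \<subseteq> X \<and> successively (\<lambda>a b. a < b \<or> b < a) xs"
  by (simp add: semiwalk_def successively_conv_nth)

lemma semiwalk_step:
  "semiwalk X L \<Longrightarrow> Suc i < length L \<Longrightarrow> L ! i < L ! Suc i \<or> L ! Suc i < L ! i"
  by (simp add: semiwalk_def)

lemma walk_iff_successively:
  "walk X xs \<longleftrightarrow>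
     xs \<noteq> [] \<and> set xs \<subseteq> X \<and> successively (\<lambda>a b. covers X a b \<or> covers X b a) xs"
  by (auto simp: walk_def semiwalk_def successively_conv_nth covers_def)

lemma crown_list_conv_map:
  "crown_list xs ys =
     map (\<lambda>k. if even k then xs ! (k div 2) else ys ! (k div 2)) [0..<2 * length xs] @ [xs ! 0]"
proof -
  have "concat (map (\<lambda>i. [xs ! i, ys ! i]) [0..<n]) =
      map (\<lambda>k. if even k then xs ! (k div 2) else ys ! (k div 2)) [0..<2 * n]" for n
    by (induction n) auto
  then show ?thesis
    by (simp add: crown_list_def)
qed

lemma length_crown_list: "length (crown_list xs ys) = Suc (2 * length xs)"
  by (simp add: crown_list_conv_map)

lemma nth_crown_list:
  "k < 2 * length xs \<Longrightarrow> crown_list xs ys ! k = (if even k then xs ! (k div 2) else ys ! (k div 2))"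
  "crown_list xs ys ! (2 * length xs) = xs ! 0"
  by (simp_all add: crown_list_conv_map nth_append)

lemma set_crown_list:
  assumes "xs \<noteq> []" "length ys = length xs"
  shows "set (crown_list xs ys) = set xs \<union> set ys"
proof -
  have "xs ! 0 \<in> set xs"
    using assms(1) by simp
  then show ?thesis
    using assms(2) by (force simp: crown_list_def in_set_conv_nth)
qed

lemma hd_crown_list:
  assumes "xs \<noteq> []"
  shows "hd (crown_list xs ys) = last (crown_list xs ys)"
proof -
  have "0 < 2 * length xs"
    using assms by simp
  then show ?thesis
    by (simp add: crown_list_conv_map upt_conv_Cons)
qed

lemma weak_crown_steps:
  assumes "weak_crown X xs ys" and k: "Suc k < length (crown_list xs ys)"
  shows "crown_list xs ys ! k < crown_list xs ys ! Suc k \<or>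
    crown_list xs ys ! Suc k < crown_list xs ys ! k"
proof -
  let ?n = "length xs"
  have up: "\<And>i. i < ?n \<Longrightarrow> xs ! i < ys ! i"
    and down: "\<And>i. Suc i < ?n \<Longrightarrow> xs ! Suc i < ys ! i"
    and wrap: "xs ! 0 < ys ! (?n - 1)"
    using assms(1) by (auto simp: weak_crown_def)
  have k: "k < 2 * ?n"
    using k by (simp add: length_crown_list)
  consider "even k" | "odd k" "Suc k < 2 * ?n" | "Suc k = 2 * ?n"
    using k by linarith
  then show ?thesis
  proof cases
    case 1
    then show ?thesis
      using k up[of "k div 2"] by (auto simp: nth_crown_list)
  next
    case 2
    moreover have "Suc k div 2 = Suc (k div 2)" "Suc (k div 2) < ?n"
      using 2 by presburger+
    ultimately show ?thesis
      using k down[of "k div 2"] by (simp add: nth_crown_list)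
  next
    case 3
    then have "odd k" "k div 2 = ?n - 1"
      by presburger+
    then show ?thesis
      using 3 k wrap nth_crown_list(2)[of xs ys] by (simp add: nth_crown_list(1))
  qed
qed

lemma weak_crown_closed_semiwalk:
  assumes "weak_crown X xs ys"
  shows "semiwalk X (crown_list xs ys) \<and> closed_walk (crown_list xs ys)"
proof -
  have "xs \<noteq> []" "length ys = length xs" "set xs \<subseteq> X" "set ys \<subseteq> X"
    using assms by (auto simp: weak_crown_def)
  then show ?thesis
    using weak_crown_steps[OF assms] set_crown_list hd_crown_list
    by (auto simp: semiwalk_def closed_walk_def crown_list_def)
qed

definition monotone_triple :: "'a::order \<Rightarrow> 'a \<Rightarrow> 'a \<Rightarrow> bool" where
  "monotone_triple a b c \<longleftrightarrow> a < b \<and> b < c \<or> c < b \<and> b < a"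

definition has_monotone_triple :: "'a::order list \<Rightarrow> bool" where
  "has_monotone_triple L \<longleftrightarrow> (\<exists>A a b c C. L = A @ a # b # c # C \<and> monotone_triple a b c)"

lemma has_monotone_tripleI:
  assumes "Suc (Suc i) < length L" and "monotone_triple (L ! i) (L ! Suc i) (L ! Suc (Suc i))"
  shows "has_monotone_triple L"
proof -
  have "L = take i L @ L ! i # L ! Suc i # L ! Suc (Suc i) # drop (Suc (Suc (Suc i))) L"
    using assms(1) by (simp add: Cons_nth_drop_Suc)
  then show ?thesis
    using assms(2) unfolding has_monotone_triple_def by blast
qed

lemma no_monotone_triple_alternates:
  assumes "semiwalk X L" and "\<not> has_monotone_triple L" and "Suc (Suc i) < length L"
  shows "L ! Suc i < L ! Suc (Suc i) \<longleftrightarrow> \<not> L ! i < L ! Suc i"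
proof -
  have "L ! i < L ! Suc i \<or> L ! Suc i < L ! i"
    "L ! Suc i < L ! Suc (Suc i) \<or> L ! Suc (Suc i) < L ! Suc i"
    using semiwalk_step[OF assms(1)] assms(3) by simp_all
  moreover have "\<not> monotone_triple (L ! i) (L ! Suc i) (L ! Suc (Suc i))"
    using assms(2,3) has_monotone_tripleI by blast
  ultimately show ?thesis
    unfolding monotone_triple_def by (meson order.asym)
qed

lemma successively_shortcut:
  "successively R (A @ a # b # c # C) \<Longrightarrow> R a c \<Longrightarrow> successively R (A @ a # c # C)"
  by (simp add: successively_append_iff)

lemma shortcut_closed_semiwalk:
  assumes "semiwalk X (A @ a # b # c # C)" "closed_walk (A @ a # b # c # C)"
    and "monotone_triple a b c"
  shows "semiwalk X (A @ a # c # C) \<and> closed_walk (A @ a # c # C)"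
proof -
  have "a < c \<or> c < a"
    using assms(3) unfolding monotone_triple_def by (meson order.strict_trans)
  moreover have "hd (A @ a # c # C) = hd (A @ a # b # c # C)"
    by (cases A) simp_all
  moreover have "last (A @ a # c # C) = last (A @ a # b # c # C)"
    by simp
  ultimately show ?thesis
    using assms(1,2) successively_shortcut[of _ A a b c C]
    by (auto simp: semiwalk_iff_successively closed_walk_def)
qed

lemma successively_cut_loop:
  assumes "successively R (xs @ y # ys @ y # zs)"
  shows "successively R (xs @ y # zs) \<and> successively R (y # ys @ [y])"
proof -
  have "successively R (xs @ (y # ys @ [y]) @ zs)"
    using assms by simp
  then have "successively R (y # ys @ [y])"
    unfolding successively_append_iff by simp
  moreover have "successively R (xs @ (y # ys)) \<and> successively R (y # zs)"
    using assms successively_append_iff[of R "xs @ y # ys" "y # zs"] by simp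
  then have "successively R (xs @ y # zs)"
    unfolding successively_append_iff by simp
  ultimately show ?thesis
    by simp
qed

lemma closed_semiwalk_cut_loop:
  assumes "semiwalk X L" "closed_walk L" "\<not> distinct (butlast L)"
  obtains xs y ys zs where "L = xs @ y # ys @ y # zs" "zs \<noteq> []"
    "semiwalk X (xs @ y # zs)" "closed_walk (xs @ y # zs)" "semiwalk X (y # ys @ [y])"
proof -
  obtain xs y ys zs where "butlast L = xs @ [y] @ ys @ [y] @ zs"
    using not_distinct_decomp[OF assms(3)] by blast
  moreover have "L = butlast L @ [last L]"
    using assms(2) by (simp add: closed_walk_def)
  ultimately have L: "L = xs @ y # ys @ y # (zs @ [last L])"
    by simp
  have "hd (xs @ y # zs @ [last L]) = hd L"
    by (subst L) (cases xs; simp)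
  then have "closed_walk (xs @ y # zs @ [last L])"
    using assms(2) by (simp add: closed_walk_def)
  moreover have "semiwalk X (xs @ y # zs @ [last L]) \<and> semiwalk X (y # ys @ [y])"
    using assms(1) successively_cut_loop[of _ xs y ys "zs @ [last L]"]
    by (subst (asm) L) (auto simp: semiwalk_iff_successively)
  ultimately show ?thesis
    using that[OF L] by simp
qed

definition rotate_cycle :: "'a list \<Rightarrow> 'a list" where
  "rotate_cycle L = tl L @ [hd (tl L)]"

lemma rotate_cycle_Cons: "r \<noteq> [] \<Longrightarrow> rotate_cycle (a # r) = r @ [hd r]"
  by (simp add: rotate_cycle_def)

lemma length_rotate_cycle: "L \<noteq> [] \<Longrightarrow> length (rotate_cycle L) = length L"
  by (simp add: rotate_cycle_def)

lemma nth_rotate_cycle: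
  assumes "length L = Suc m" "0 < m"
  shows "i < m \<Longrightarrow> rotate_cycle L ! i = L ! Suc i" and "rotate_cycle L ! m = L ! 1"
  using assms by (cases L; auto simp: rotate_cycle_def nth_append nth_tl hd_conv_nth)+

lemma closed_walk_nth_last:
  "closed_walk L \<Longrightarrow> length L = Suc m \<Longrightarrow> L ! m = L ! 0"
  by (auto simp: closed_walk_def hd_conv_nth last_conv_nth)

lemma closed_walk_ConsE:
  assumes "closed_walk L" "2 \<le> length L"
  obtains a r where "L = a # r" "r \<noteq> []" "last r = a"
proof -
  obtain a r where L: "L = a # r"
    using assms by (cases L) auto
  moreover have "r \<noteq> []"
    using assms(2) L by auto
  ultimately show ?thesis
    using that assms(1) by (simp add: closed_walk_def)
qed

lemma closed_semiwalk_rotate_cycle: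
  assumes "semiwalk X L" "closed_walk L" "2 \<le> length L"
  shows "semiwalk X (rotate_cycle L) \<and> closed_walk (rotate_cycle L)"
proof -
  obtain a r where L: "L = a # r" and "r \<noteq> []" "last r = a"
    using closed_walk_ConsE[OF assms(2,3)] by blast
  then show ?thesis
    using assms(1)
    by (auto simp: rotate_cycle_Cons semiwalk_iff_successively closed_walk_def
        successively_append_iff successively_Cons)
qed

lemma edge_sum_rotate_cycle:
  assumes "closed_walk L" "2 \<le> length L"
  shows "edge_sum f (rotate_cycle L) = edge_sum f L"
proof -
  obtain a r where L: "L = a # r" and "r \<noteq> []" "last r = a"
    using closed_walk_ConsE[OF assms(1,2)] by blast
  moreover have "edge_sum f (a # r) = f a (hd r) + edge_sum f r"
    using \<open>r \<noteq> []\<close> by (cases r) auto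
  ultimately show ?thesis
    by (simp add: rotate_cycle_Cons edge_sum_snoc add.commute)
qed

lemma distinct_butlast_rotate_cycle:
  assumes "closed_walk L" "2 \<le> length L" "distinct (butlast L)"
  shows "distinct (butlast (rotate_cycle L))"
proof -
  obtain a r where L: "L = a # r" and "r \<noteq> []" "last r = a"
    using closed_walk_ConsE[OF assms(1,2)] by blast
  then have r: "r = butlast r @ [a]"
    by (metis append_butlast_last_id)
  have "distinct (a # butlast r)"
    using assms(3) L \<open>r \<noteq> []\<close> by simp
  then have "distinct (butlast r @ [a])"
    by simp
  then have "distinct r"
    using r by metis
  then show ?thesis
    using \<open>r \<noteq> []\<close> by (simp add: rotate_cycle_Cons L)
qed

lemma alternating_parity:
  assumes "semiwalk X L" "\<not> has_monotone_triple L" "length L = Suc m"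
    and first_up: "L ! 0 < L ! 1" and last_down: "L ! m < L ! (m - 1)"
  shows "even m \<and> (\<forall>i<m. L ! i < L ! Suc i \<longleftrightarrow> even i)"
proof -
  have pattern: "L ! i < L ! Suc i \<longleftrightarrow> even i" if "i < m" for i
    using that
  proof (induction i)
    case (Suc i)
    then show ?case
      using no_monotone_triple_alternates[OF assms(1,2), of i] assms(3) by simp
  qed (use first_up in simp)
  have "0 < m"
    using last_down by (cases m) auto
  then have "\<not> L ! (m - 1) < L ! Suc (m - 1)"
    using last_down by auto
  then have "even m"
    using pattern[of "m - 1"] \<open>0 < m\<close> by simp
  then show ?thesis
    using pattern by blast
qed

lemma distinct_even_odd_nths:
  assumes "inj_on ((!) L) {..<2 * n}"
  shows "distinct (map (\<lambda>i. L ! (2 * i)) [0..<n] @ map (\<lambda>i. L ! (2 * i + 1)) [0..<n])"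
proof -
  define I where "I = map (\<lambda>i. 2 * i) [0..<n] @ map (\<lambda>i. 2 * i + 1) [0..<n]"
  have "distinct I"
    by (auto simp: I_def distinct_map inj_on_def) presburger
  moreover have "set I \<subseteq> {..<2 * n}"
    by (auto simp: I_def)
  ultimately have "distinct (map ((!) L) I)"
    using assms by (metis distinct_map inj_on_subset)
  then show ?thesis
    by (simp add: I_def comp_def)
qed

lemma alternating_cycle_is_crown:
  assumes "semiwalk X L" "closed_walk L" "distinct (butlast L)"
    and len: "length L = Suc (2 * n)" and "2 \<le> n"
    and pattern: "\<And>i. i < 2 * n \<Longrightarrow> L ! i < L ! Suc i \<longleftrightarrow> even i"
  shows "\<exists>xs ys. weak_crown X xs ys \<and> crown_list xs ys = L"
proof -
  define xs where "xs = map (\<lambda>i. L ! (2 * i)) [0..<n]"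
  define ys where "ys = map (\<lambda>i. L ! (2 * i + 1)) [0..<n]"
  have up: "L ! i < L ! Suc i" if "i < 2 * n" "even i" for i
    using pattern that by blast
  have down: "L ! Suc i < L ! i" if "i < 2 * n" "odd i" for i
    using pattern[OF that(1)] that assms(1) len by (auto simp: semiwalk_def)
  have closed: "L ! (2 * n) = L ! 0"
    using closed_walk_nth_last[OF assms(2) len] .
  have inj: "inj_on ((!) L) {..<2 * n}"
    using assms(3) len by (auto simp: inj_on_def nth_butlast distinct_conv_nth)
  have "length xs = n"
    by (simp add: xs_def)
  then have "crown_list xs ys ! (2 * n) = L ! (2 * n)"
    using \<open>2 \<le> n\<close> closed nth_crown_list(2)[of xs ys] by (simp add: xs_def)
  then have "crown_list xs ys = L"
    by (intro nth_equalityI)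
      (auto simp: length_crown_list nth_crown_list xs_def ys_def len less_Suc_eq)
  moreover have "distinct (xs @ ys)"
    using distinct_even_odd_nths[OF inj] by (simp add: xs_def ys_def)
  moreover have "set xs \<subseteq> X" "set ys \<subseteq> X"
    using assms(1) len by (auto simp: xs_def ys_def semiwalk_def)
  moreover have "xs ! 0 < ys ! (n - 1)"
  proof -
    have "Suc (2 * (n - 1)) = 2 * n - 1" "Suc (2 * n - 1) = 2 * n"
      using \<open>2 \<le> n\<close> by simp_all
    moreover have "xs ! 0 = L ! (2 * n)" "ys ! (n - 1) = L ! Suc (2 * (n - 1))"
      using \<open>2 \<le> n\<close> closed by (simp_all add: xs_def ys_def)
    ultimately show ?thesis
      using down[of "2 * n - 1"] \<open>2 \<le> n\<close> by simp
  qed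
  ultimately have "weak_crown X xs ys"
    using up down \<open>2 \<le> n\<close> by (auto simp: weak_crown_def xs_def ys_def)
  then show ?thesis
    using \<open>crown_list xs ys = L\<close> by blast
qed

lemma up_down_closed_semiwalk_is_crown:
  assumes "semiwalk X L" "closed_walk L" "distinct (butlast L)" "\<not> has_monotone_triple L"
    and "length L = Suc m" "3 \<le> m" and "L ! 0 < L ! 1" "L ! m < L ! (m - 1)"
  shows "\<exists>xs ys. weak_crown X xs ys \<and> crown_list xs ys = L"
proof -
  have "even m" "\<And>i. i < m \<Longrightarrow> L ! i < L ! Suc i \<longleftrightarrow> even i"
    using alternating_parity[of X L m] assms by auto
  moreover obtain n where "m = 2 * n"
    using \<open>even m\<close> by blast
  ultimately show ?thesis
    using alternating_cycle_is_crown[of X L n] assms by auto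
qed

lemma cyclically_alternating_is_crown:
  assumes L: "semiwalk X L" "closed_walk L" "distinct (butlast L)" "\<not> has_monotone_triple L"
    and R: "\<not> has_monotone_triple (rotate_cycle L)" and len: "length L = Suc m" and "3 \<le> m"
  shows "\<exists>xs ys. weak_crown X xs ys \<and> (crown_list xs ys = L \<or> crown_list xs ys = rotate_cycle L)"
proof -
  have "L \<noteq> []"
    using len by auto
  have rot: "semiwalk X (rotate_cycle L)" "closed_walk (rotate_cycle L)"
      "distinct (butlast (rotate_cycle L))" "length (rotate_cycle L) = Suc m"
    using closed_semiwalk_rotate_cycle[of X L] distinct_butlast_rotate_cycle[of L]
      length_rotate_cycle[OF \<open>L \<noteq> []\<close>] L len \<open>3 \<le> m\<close> by auto
  have shift: "\<And>i. i < m \<Longrightarrow> rotate_cycle L ! i = L ! Suc i" "rotate_cycle L ! m = L ! 1"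
    using nth_rotate_cycle[OF len] \<open>3 \<le> m\<close> by auto
  have closed: "L ! m = L ! 0"
    using closed_walk_nth_last[OF L(2) len] .
  have "L ! 0 < L ! 1 \<or> L ! 1 < L ! 0"
    using semiwalk_step[OF L(1), of 0] len \<open>3 \<le> m\<close> by simp
  then show ?thesis
  proof
    assume up: "L ! 0 < L ! 1"
    have "L ! m < L ! 1 \<longleftrightarrow> \<not> L ! (m - 1) < L ! m"
      using no_monotone_triple_alternates[OF rot(1) R, of "m - 2"] rot(4) shift \<open>3 \<le> m\<close>
      by (simp add: numeral_2_eq_2 Suc_diff_Suc)
    moreover have "L ! (m - 1) < L ! m \<or> L ! m < L ! (m - 1)"
      using semiwalk_step[OF L(1), of "m - 1"] len \<open>3 \<le> m\<close> by simp
    ultimately have "L ! m < L ! (m - 1)"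
      using up closed by auto
    then show ?thesis
      using up_down_closed_semiwalk_is_crown[OF L len \<open>3 \<le> m\<close> up] by blast
  next
    assume down: "L ! 1 < L ! 0"
    have "L ! 1 < L ! 2"
      using no_monotone_triple_alternates[OF L(1,4), of 0] len down \<open>3 \<le> m\<close>
      by (auto simp: numeral_2_eq_2)
    then have "rotate_cycle L ! 0 < rotate_cycle L ! 1"
      using shift(1)[of 0] shift(1)[of 1] \<open>3 \<le> m\<close> by (simp add: numeral_2_eq_2)
    moreover have "rotate_cycle L ! m < rotate_cycle L ! (m - 1)"
      using shift(1)[of "m - 1"] shift(2) down closed \<open>3 \<le> m\<close> by simp
    ultimately show ?thesis
      using up_down_closed_semiwalk_is_crown[OF rot(1-3) R rot(4) \<open>3 \<le> m\<close>] by blast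
  qed
qed

section \<open>Weights additive along chains\<close>

locale chain_additive_weight =
  fixes X :: "'a::order set" and f :: "'a \<Rightarrow> 'a \<Rightarrow> 'b::ab_group_add"
  assumes weight_antisym: "f b a = - f a b"
    and weight_additive: "\<lbrakk>a \<in> X; b \<in> X; c \<in> X; a < b; b < c\<rbrakk> \<Longrightarrow> f a c = f a b + f b c"
begin

lemma edge_sum_increasing:
  assumes "successively (<) vs" and "set vs \<subseteq> X" and "2 \<le> length vs"
  shows "edge_sum f vs = f (hd vs) (last vs)"
  using assms
proof (induction vs rule: induct_list012)
  case (3 a b r)
  show ?case
  proof (cases "r = []")
    case False
    have "sorted_wrt (<) (a # b # r)"
      using "3.prems"(1) successively_conv_sorted_wrt[OF transp_on_less] by blast
    then have "a < b" "b < last r"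
      using False by auto
    moreover have "last r \<in> X"
      using "3.prems"(2) False by auto
    moreover have "edge_sum f (b # r) = f b (last r)"
      using "3.IH"(2) "3.prems" False by (simp add: Suc_le_eq)
    ultimately show ?thesis
      using "3.prems"(2) weight_additive[of a b "last r"] False by simp
  qed simp
qed auto

lemma cover_path:
  assumes "finite X" and "a \<in> X" "b \<in> X" and "a < b"
  shows "\<exists>P. P \<noteq> [] \<and> set P \<subseteq> X \<and> successively (covers X) P \<and>
    hd P = a \<and> last P = b \<and> edge_sum f P = f a b"
proof -
  have "is_chain X {a, b}"
    using assms by (auto simp: is_chain_def less_imp_le)
  then obtain vs where vs: "max_chain_list X vs" and "{a, b} \<subseteq> set vs"
    using max_chain_list_extends[OF \<open>finite X\<close>] by blast
  then obtain i j where ij: "i < length vs" "j < length vs" "vs ! i = a" "vs ! j = b"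
    by (auto simp: in_set_conv_nth)
  have sorted: "sorted_wrt (<) vs" and "set vs \<subseteq> X"
    using vs by (auto simp: max_chain_list_def maximal_chain_def is_chain_def)
  have "i < j"
    using sorted_wrt_less_index_less[OF sorted] ij \<open>a < b\<close> by blast
  define P where "P = drop i (take (Suc j) vs)"
  have covers: "successively (covers X) P"
    using max_chain_list_covers[OF vs] successively_append_iff[of _ "take (Suc j) vs"]
      successively_append_iff[of _ "take i (take (Suc j) vs)"]
    unfolding P_def by (metis append_take_drop_id)
  have "set P \<subseteq> X"
    using \<open>set vs \<subseteq> X\<close> unfolding P_def by (meson in_set_dropD in_set_takeD subset_iff)
  moreover have "hd P = a" "last P = b" "2 \<le> length P" "P \<noteq> []"
    using ij \<open>i < j\<close> by (simp_all add: P_def hd_drop_conv_nth last_conv_nth)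
  moreover have "successively (<) P"
    using covers by (rule successively_mono) (simp add: covers_def)
  ultimately show ?thesis
    using covers edge_sum_increasing[of P] by auto
qed

lemma comparable_cover_path:
  assumes "finite X" and "a \<in> X" "b \<in> X" and "a < b \<or> b < a"
  shows "\<exists>P. P \<noteq> [] \<and> set P \<subseteq> X \<and> successively (\<lambda>x y. covers X x y \<or> covers X y x) P \<and>
    hd P = a \<and> last P = b \<and> edge_sum f P = f a b"
  using \<open>a < b \<or> b < a\<close>
proof
  assume "a < b"
  then obtain P where "P \<noteq> []" "set P \<subseteq> X" "successively (covers X) P"
      "hd P = a" "last P = b" "edge_sum f P = f a b"
    using cover_path assms by blast
  then show ?thesis
    by (intro exI[of _ P]) (auto elim: successively_mono)
next
  assume "b < a"
  then obtain P where "P \<noteq> []" "set P \<subseteq> X" "successively (covers X) P"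
      "hd P = b" "last P = a" "edge_sum f P = f b a"
    using cover_path assms by blast
  moreover have "edge_sum f (rev P) = f a b"
    using edge_sum_rev[of f P, OF weight_antisym] \<open>edge_sum f P = f b a\<close> weight_antisym[of a b]
    by simp
  ultimately show ?thesis
    by (intro exI[of _ "rev P"]) (auto simp: hd_rev last_rev elim: successively_mono)
qed

lemma semiwalk_refines_to_walk:
  assumes "finite X" and "semiwalk X xs"
  shows "\<exists>ys. walk X ys \<and> hd ys = hd xs \<and> last ys = last xs \<and> edge_sum f ys = edge_sum f xs"
proof -
  have "\<exists>ys. ys \<noteq> [] \<and> set ys \<subseteq> X \<and> successively (\<lambda>x y. covers X x y \<or> covers X y x) ys \<and>
      hd ys = hd xs \<and> last ys = last xs \<and> edge_sum f ys = edge_sum f xs"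
    if "xs \<noteq> []" "set xs \<subseteq> X" "successively (\<lambda>a b. a < b \<or> b < a) xs"
    using that
  proof (induction xs rule: induct_list012)
    case (2 a)
    then show ?case by (intro exI[of _ "[a]"]) simp
  next
    case (3 a b r)
    obtain ys where ys: "ys \<noteq> []" "set ys \<subseteq> X"
        "successively (\<lambda>x y. covers X x y \<or> covers X y x) ys"
        "hd ys = b" "last ys = last (b # r)" "edge_sum f ys = edge_sum f (b # r)"
      using "3.IH"(2) "3.prems" by auto
    obtain P where P: "P \<noteq> []" "set P \<subseteq> X"
        "successively (\<lambda>x y. covers X x y \<or> covers X y x) P"
        "hd P = a" "last P = b" "edge_sum f P = f a b"
      using comparable_cover_path[OF \<open>finite X\<close>, of a b] "3.prems" by auto
    have "last (P @ tl ys) = last ys"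
      using P(1,5) ys(1,4) by (cases ys) auto
    then show ?case
      using P ys successively_glue[OF P(3) ys(3)] edge_sum_glue[of P ys f]
      by (intro exI[of _ "P @ tl ys"]) (auto dest: list.set_sel(2))
  qed simp
  then show ?thesis
    using assms(2) by (simp add: semiwalk_iff_successively walk_iff_successively)
qed

lemma weight_monotone_triple:
  assumes "a \<in> X" "b \<in> X" "c \<in> X" "monotone_triple a b c"
  shows "f a c = f a b + f b c"
  using assms(4) unfolding monotone_triple_def
proof
  assume "c < b \<and> b < a"
  then have "f c a = f c b + f b a"
    using assms(1-3) weight_additive by blast
  then show ?thesis
    using weight_antisym[of a c] weight_antisym[of a b] weight_antisym[of b c]
    by (simp add: algebra_simps)
qed (use assms(1-3) weight_additive in blast)

lemma edge_sum_shortcut: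
  assumes "a \<in> X" "b \<in> X" "c \<in> X" "monotone_triple a b c"
  shows "edge_sum f (A @ a # c # C) = edge_sum f (A @ a # b # c # C)"
  using edge_sum_append[of f A a "b # c # C"] edge_sum_append[of f A a "c # C"]
    weight_monotone_triple[OF assms]
  by (simp add: add.assoc)

lemma closed_semiwalk_short:
  assumes "semiwalk X L" "closed_walk L" "length L \<le> 3"
  shows "edge_sum f L = 0"
proof -
  have "L \<noteq> []"
    using assms(1) by (simp add: semiwalk_def)
  then have "length L = 1 \<or> length L = 2 \<or> length L = 3"
    using assms(3) by (cases "length L") auto
  then consider a where "L = [a]" | a b where "L = [a, b]" | a b c where "L = [a, b, c]"
    by (auto simp: length_Suc_conv numeral_2_eq_2 numeral_3_eq_3)
  then show ?thesis
  proof cases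
    case (2 a b)
    then show ?thesis
      using assms(1,2) by (auto simp: semiwalk_def closed_walk_def)
  next
    case (3 a b c)
    then show ?thesis
      using assms(2) weight_antisym[of a b] by (simp add: closed_walk_def)
  qed simp
qed

lemma closed_semiwalk_shortcut:
  assumes "semiwalk X K" "closed_walk K" "has_monotone_triple K"
  obtains K' where "semiwalk X K'" "closed_walk K'" "length K' < length K"
    "edge_sum f K' = edge_sum f K"
proof -
  obtain A a b c C where K: "K = A @ a # b # c # C" and abc: "monotone_triple a b c"
    using assms(3) unfolding has_monotone_triple_def by blast
  moreover have "a \<in> X" "b \<in> X" "c \<in> X"
    using assms(1) K by (auto simp: semiwalk_def)
  ultimately show ?thesis
    using that[of "A @ a # c # C"] shortcut_closed_semiwalk[OF assms(1,2)[unfolded K] abc]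
      edge_sum_shortcut by simp
qed

lemma closed_semiwalk_edge_sum_zero:
  assumes crowns: "\<And>xs ys. weak_crown X xs ys \<Longrightarrow> edge_sum f (crown_list xs ys) = 0"
  shows "semiwalk X L \<Longrightarrow> closed_walk L \<Longrightarrow> edge_sum f L = 0"
proof (induction "length L" arbitrary: L rule: less_induct)
  case less
  consider (short) "length L \<le> 3" | (loop) "\<not> distinct (butlast L)"
    | (triple) "has_monotone_triple L"
    | (rotated_triple) "has_monotone_triple (rotate_cycle L)" "3 < length L"
    | (crown) "3 < length L" "distinct (butlast L)" "\<not> has_monotone_triple L"
        "\<not> has_monotone_triple (rotate_cycle L)"
    by fastforce
  then show ?case
  proof cases
    case short
    then show ?thesis
      using closed_semiwalk_short less.prems by blast
  next
    case loop
    then obtain xs y ys zs where L: "L = xs @ y # ys @ y # zs" "zs \<noteq> []"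
      and "semiwalk X (xs @ y # zs)" "closed_walk (xs @ y # zs)" "semiwalk X (y # ys @ [y])"
      using closed_semiwalk_cut_loop less.prems by blast
    then have "edge_sum f (xs @ y # zs) = 0" "edge_sum f (y # ys @ [y]) = 0"
      using less.hyps by (simp_all add: closed_walk_def)
    then show ?thesis
      using edge_sum_split_cycle[of f xs y ys zs] L(1) by simp
  next
    case triple
    then show ?thesis
      using closed_semiwalk_shortcut[OF less.prems] less.hyps by metis
  next
    case rotated_triple
    then have "2 \<le> length L" "L \<noteq> []"
      by auto
    then have "semiwalk X (rotate_cycle L)" "closed_walk (rotate_cycle L)"
        "length (rotate_cycle L) = length L" "edge_sum f (rotate_cycle L) = edge_sum f L"
      using closed_semiwalk_rotate_cycle[OF less.prems] length_rotate_cycle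
        edge_sum_rotate_cycle[OF less.prems(2)] by auto
    then obtain K where "semiwalk X K" "closed_walk K" "length K < length L"
        "edge_sum f K = edge_sum f L"
      using closed_semiwalk_shortcut[of "rotate_cycle L"] rotated_triple(1) by metis
    then show ?thesis
      using less.hyps by metis
  next
    case crown
    then obtain m where "length L = Suc m" "3 \<le> m"
      by (cases "length L") auto
    then obtain xs ys where "weak_crown X xs ys"
        "crown_list xs ys = L \<or> crown_list xs ys = rotate_cycle L"
      using cyclically_alternating_is_crown[OF less.prems crown(2-4)] by blast
    moreover have "edge_sum f (rotate_cycle L) = edge_sum f L"
      using edge_sum_rotate_cycle[OF less.prems(2)] crown(1) by simp
    ultimately show ?thesis
      using crowns[of xs ys] by auto
  qed
qed

end

section \<open>Bijections monotone on maximal chains\<close>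

definition chain_pairs :: "'a list \<Rightarrow> ('a \<times> 'a) set" where
  "chain_pairs vs = (\<lambda>(i, j). (vs ! i, vs ! j)) ` {(i, j). i < j \<and> j < length vs}"

lemma chain_pairs_subset_basis: "max_chain_list X vs \<Longrightarrow> chain_pairs vs \<subseteq> basis X"
  by (auto simp: chain_pairs_def basis_def max_chain_list_def maximal_chain_def is_chain_def
      sorted_wrt_nth_less)

lemma max_chain_list_chain_pairsI:
  assumes "max_chain_list X vs" "x \<in> set vs" "y \<in> set vs" "x < y"
  shows "(x, y) \<in> chain_pairs vs"
proof -
  obtain i j where "i < length vs" "j < length vs" "vs ! i = x" "vs ! j = y"
    using assms(2,3) by (auto simp: in_set_conv_nth)
  moreover from this have "i < j"
    using sorted_wrt_less_index_less[of vs i j] assms(1,4) by (simp add: max_chain_list_def)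
  ultimately show ?thesis
    unfolding chain_pairs_def by auto
qed

lemma image_chain_pairsE:
  assumes "(x, y) \<in> h ` chain_pairs us"
  obtains i j where "i < j" "j < length us" "h (us ! i, us ! j) = (x, y)"
  using assms by (auto simp: chain_pairs_def)

locale monotone_on_chains =
  fixes X :: "'a::order set" and \<theta> :: "'a \<times> 'a \<Rightarrow> 'a \<times> 'a"
  assumes finite_X: "finite X" and theta_M: "\<theta> \<in> M_set X"
begin

lemma inj_on_theta: "inj_on \<theta> (basis X)"
  using theta_M by (simp add: M_set_def bij_betw_def)

lemma theta_basis: "\<theta> ` basis X = basis X"
  using theta_M by (simp add: M_set_def bij_betw_def)

lemma increasing_or_decreasing: "max_chain_list X us \<Longrightarrow> increasing_on X \<theta> us \<or> decreasing_on X \<theta> us"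
  using theta_M by (simp add: M_set_def)

lemma image_chain_pairs:
  assumes "max_chain_list X us"
  shows "\<exists>vs. max_chain_list X vs \<and> \<theta> ` chain_pairs us = chain_pairs vs"
  using increasing_or_decreasing[OF assms]
proof
  assume "increasing_on X \<theta> us"
  then obtain vs where vs: "max_chain_list X vs" "length vs = length us"
    and inc: "\<And>i j. i < j \<and> j < length us \<Longrightarrow> \<theta> (us ! i, us ! j) = (vs ! i, vs ! j)"
    unfolding increasing_on_def by blast
  have "\<theta> ` chain_pairs us = chain_pairs vs"
    unfolding chain_pairs_def image_image vs(2)
    by (intro image_cong) (auto simp: inc)
  then show ?thesis
    using vs(1) by blast
next
  assume "decreasing_on X \<theta> us"
  then obtain vs where vs: "max_chain_list X vs" "length vs = length us"
    and dec: "\<And>i j. i < j \<and> j < length us \<Longrightarrow>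
      \<theta> (us ! i, us ! j) = (vs ! (length us - 1 - j), vs ! (length us - 1 - i))"
    unfolding decreasing_on_def by blast
  let ?n = "length us" and ?I = "{(i, j). i < j \<and> j < length us}"
  have flip: "(\<lambda>(i, j). (?n - 1 - j, ?n - 1 - i)) ` ?I = ?I"
  proof
    show "?I \<subseteq> (\<lambda>(i, j). (?n - 1 - j, ?n - 1 - i)) ` ?I"
    proof
      fix p assume "p \<in> ?I"
      then show "p \<in> (\<lambda>(i, j). (?n - 1 - j, ?n - 1 - i)) ` ?I"
        by (intro image_eqI[of _ _ "(?n - 1 - snd p, ?n - 1 - fst p)"]) auto
    qed
  qed auto
  have "\<theta> ` chain_pairs us = (\<lambda>(i, j). (vs ! i, vs ! j)) ` (\<lambda>(i, j). (?n - 1 - j, ?n - 1 - i)) ` ?I"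
    unfolding chain_pairs_def image_image by (intro image_cong) (auto simp: dec)
  then have "\<theta> ` chain_pairs us = chain_pairs vs"
    unfolding flip chain_pairs_def vs(2) .
  then show ?thesis
    using vs(1) by blast
qed

lemma chain_pairs_preimage:
  assumes "max_chain_list X vs"
  shows "\<exists>us. max_chain_list X us \<and> chain_pairs vs = \<theta> ` chain_pairs us"
proof -
  let ?P = "chain_pairs ` {us. max_chain_list X us}"
  have "?P \<subseteq> Pow (basis X)"
    using chain_pairs_subset_basis by blast
  moreover have "finite (basis X)"
    using finite_X by (intro finite_subset[of "basis X" "X \<times> X"]) (auto simp: basis_def)
  ultimately have "finite ?P" "inj_on ((`) \<theta>) ?P"
    using inj_on_image_Pow[OF inj_on_theta] by (auto intro: finite_subset inj_on_subset)
  moreover have "(`) \<theta> ` ?P \<subseteq> ?P"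
    using image_chain_pairs by fastforce
  ultimately have "(`) \<theta> ` ?P = ?P"
    by (intro endo_inj_surj)
  moreover have "chain_pairs vs \<in> ?P"
    using assms by blast
  ultimately obtain us where "max_chain_list X us" "chain_pairs vs = \<theta> ` chain_pairs us"
    by (metis (no_types, lifting) imageE mem_Collect_eq)
  then show ?thesis
    by blast
qed

lemma chain_relabelling:
  assumes "max_chain_list X us"
  shows "\<exists>g. inj_on g {..<length us} \<and>
    ((\<forall>i j. i < j \<and> j < length us \<longrightarrow> \<theta> (us ! i, us ! j) = (g i, g j)) \<or>
     (\<forall>i j. i < j \<and> j < length us \<longrightarrow> \<theta> (us ! i, us ! j) = (g j, g i)))"
  using increasing_or_decreasing[OF assms]
proof
  assume "increasing_on X \<theta> us"
  then obtain vs where "max_chain_list X vs" "length vs = length us"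
    "\<forall>i j. i < j \<and> j < length us \<longrightarrow> \<theta> (us ! i, us ! j) = (vs ! i, vs ! j)"
    unfolding increasing_on_def by blast
  moreover from this have "inj_on ((!) vs) {..<length us}"
    using sorted_wrt_less_distinct[of vs]
    by (auto simp: inj_on_def nth_eq_iff_index_eq max_chain_list_def)
  ultimately show ?thesis
    by blast
next
  assume "decreasing_on X \<theta> us"
  then obtain vs where "max_chain_list X vs" "length vs = length us"
    "\<forall>i j. i < j \<and> j < length us \<longrightarrow>
      \<theta> (us ! i, us ! j) = (vs ! (length us - 1 - j), vs ! (length us - 1 - i))"
    unfolding decreasing_on_def by blast
  moreover from this have "inj_on (\<lambda>k. vs ! (length us - 1 - k)) {..<length us}"
    using sorted_wrt_less_distinct[of vs]
    by (auto simp: inj_on_def nth_eq_iff_index_eq max_chain_list_def)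
  ultimately show ?thesis
    by (intro exI[of _ "\<lambda>k. vs ! (length us - 1 - k)"]) auto
qed

lemma triangle_in_image_of_chain:
  assumes "a \<in> X" "b \<in> X" "c \<in> X" "a < b" "b < c"
  shows "\<exists>us. max_chain_list X us \<and> {(a, b), (b, c), (a, c)} \<subseteq> \<theta> ` chain_pairs us"
proof -
  have "is_chain X {a, b, c}"
    using assms by (auto simp: is_chain_def less_imp_le intro: order.trans)
  then obtain vs where vs: "max_chain_list X vs" "{a, b, c} \<subseteq> set vs"
    using max_chain_list_extends[OF finite_X] by blast
  then obtain us where "max_chain_list X us" "chain_pairs vs = \<theta> ` chain_pairs us"
    using chain_pairs_preimage by blast
  moreover have "{(a, b), (b, c), (a, c)} \<subseteq> chain_pairs vs"
    using vs assms(4,5) by (auto intro!: max_chain_list_chain_pairsI intro: order.strict_trans)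
  ultimately show ?thesis
    by auto
qed

lemma triangle_preimage:
  assumes "a \<in> X" "b \<in> X" "c \<in> X" "a < b" "b < c"
  shows "\<exists>u v w. {u, v, w} \<subseteq> X \<and> u < v \<and> v < w \<and> \<theta> (u, w) = (a, c) \<and>
    (\<theta> (u, v) = (a, b) \<and> \<theta> (v, w) = (b, c) \<or> \<theta> (u, v) = (b, c) \<and> \<theta> (v, w) = (a, b))"
proof -
  obtain us where us: "max_chain_list X us"
    and "(a, b) \<in> \<theta> ` chain_pairs us" "(b, c) \<in> \<theta> ` chain_pairs us" "(a, c) \<in> \<theta> ` chain_pairs us"
    using triangle_in_image_of_chain[OF assms] by auto
  then obtain i j k l p q where idx: "i < j" "j < length us" "k < l" "l < length us"
      "p < q" "q < length us" and
    pairs: "\<theta> (us ! i, us ! j) = (a, b)" "\<theta> (us ! k, us ! l) = (b, c)" "\<theta> (us ! p, us ! q) = (a, c)"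
    by (elim image_chain_pairsE)
  have sorted: "sorted_wrt (<) us" and "set us \<subseteq> X"
    using us by (auto simp: max_chain_list_def maximal_chain_def is_chain_def)
  then have inX: "us ! x \<in> X" if "x < length us" for x
    using that by auto
  obtain g where g: "inj_on g {..<length us}"
    and cases: "(\<forall>i j. i < j \<and> j < length us \<longrightarrow> \<theta> (us ! i, us ! j) = (g i, g j)) \<or>
      (\<forall>i j. i < j \<and> j < length us \<longrightarrow> \<theta> (us ! i, us ! j) = (g j, g i))"
    using chain_relabelling[OF us] by blast
  have g_eq: "g x = g y \<Longrightarrow> x < length us \<Longrightarrow> y < length us \<Longrightarrow> x = y" for x y
    using g by (auto dest: inj_onD)
  from cases show ?thesis
  proof
    assume inc: "\<forall>i j. i < j \<and> j < length us \<longrightarrow> \<theta> (us ! i, us ! j) = (g i, g j)"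
    then have "j = k" "i = p" "l = q"
      using pairs idx by (auto intro!: g_eq)
    then show ?thesis
      using pairs idx inX sorted_wrt_nth_less[OF sorted]
      by (intro exI[of _ "us ! i"] exI[of _ "us ! j"] exI[of _ "us ! l"]) auto
  next
    assume dec: "\<forall>i j. i < j \<and> j < length us \<longrightarrow> \<theta> (us ! i, us ! j) = (g j, g i)"
    then have "i = l" "j = q" "k = p"
      using pairs idx by (auto intro!: g_eq)
    then show ?thesis
      using pairs idx inX sorted_wrt_nth_less[OF sorted]
      by (intro exI[of _ "us ! k"] exI[of _ "us ! i"] exI[of _ "us ! j"]) auto
  qed
qed

definition potential :: "'a \<Rightarrow> 'a \<times> 'a \<Rightarrow> int" where
  "potential z p =
     of_bool (fst (inv_into (basis X) \<theta> p) = z) - of_bool (snd (inv_into (basis X) \<theta> p) = z)"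

definition step_weight :: "'a \<Rightarrow> 'a \<Rightarrow> 'a \<Rightarrow> int" where
  "step_weight z a b =
     (if a < b then potential z (a, b) else if b < a then - potential z (b, a) else 0)"

lemma potential_theta:
  "(u, v) \<in> basis X \<Longrightarrow> potential z (\<theta> (u, v)) = of_bool (u = z) - of_bool (v = z)"
  by (simp add: potential_def inv_into_f_f[OF inj_on_theta])

lemma potential_additive:
  assumes "a \<in> X" "b \<in> X" "c \<in> X" "a < b" "b < c"
  shows "potential z (a, c) = potential z (a, b) + potential z (b, c)"
proof -
  obtain u v w where uvw: "{u, v, w} \<subseteq> X" "u < v" "v < w" "\<theta> (u, w) = (a, c)"
    and "\<theta> (u, v) = (a, b) \<and> \<theta> (v, w) = (b, c) \<or> \<theta> (u, v) = (b, c) \<and> \<theta> (v, w) = (a, b)"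
    using triangle_preimage[OF assms] by blast
  moreover have "(u, v) \<in> basis X" "(v, w) \<in> basis X" "(u, w) \<in> basis X"
    using uvw by (auto simp: basis_def)
  ultimately show ?thesis
    using potential_theta[of u v z] potential_theta[of v w z] potential_theta[of u w z] by auto
qed

lemma chain_additive_step_weight: "chain_additive_weight X (step_weight z)"
proof
  show "step_weight z b a = - step_weight z a b" for a b
    by (auto simp: step_weight_def)
  show "step_weight z a c = step_weight z a b + step_weight z b c"
    if "a \<in> X" "b \<in> X" "c \<in> X" "a < b" "b < c" for a b c
    using that potential_additive[OF that] by (auto simp: step_weight_def)
qed

lemma theta_eq_iff_inv_into:
  assumes "p \<in> basis X" "q \<in> basis X"
  shows "\<theta> q = p \<longleftrightarrow> q = inv_into (basis X) \<theta> p"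
proof
  assume "\<theta> q = p"
  then show "q = inv_into (basis X) \<theta> p"
    using inv_into_f_f[OF inj_on_theta assms(2)] by simp
next
  assume "q = inv_into (basis X) \<theta> p"
  then show "\<theta> q = p"
    using f_inv_into_f[of p \<theta> "basis X"] assms(1) theta_basis by simp
qed

lemma preimage_starts_at_iff:
  assumes "p \<in> basis X" "z \<in> X"
  shows "(\<exists>w\<in>X. z < w \<and> \<theta> (z, w) = p) \<longleftrightarrow> fst (inv_into (basis X) \<theta> p) = z"
proof -
  have "inv_into (basis X) \<theta> p \<in> basis X"
    using assms(1) theta_basis by (metis inv_into_into)
  then show ?thesis
    using assms theta_eq_iff_inv_into[OF assms(1)] by (auto simp: basis_def)
qed

lemma preimage_ends_at_iff:
  assumes "p \<in> basis X" "z \<in> X"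
  shows "(\<exists>w\<in>X. w < z \<and> \<theta> (w, z) = p) \<longleftrightarrow> snd (inv_into (basis X) \<theta> p) = z"
proof -
  have "inv_into (basis X) \<theta> p \<in> basis X"
    using assms(1) theta_basis by (metis inv_into_into)
  then show ?thesis
    using assms theta_eq_iff_inv_into[OF assms(1)] by (auto simp: basis_def)
qed

lemma balanced_at_iff_edge_sum:
  assumes "semiwalk X L" "z \<in> X"
  shows "balanced_at X \<theta> L z \<longleftrightarrow> edge_sum (step_weight z) L = 0"
proof -
  let ?m = "length L - 1"
  have card_eq: "int (card {i. Suc i < length L \<and> P i}) = (\<Sum>i<?m. of_bool (P i))" for P
  proof -
    have "{i. Suc i < length L \<and> P i} = {i \<in> {..<?m}. P i}"
      by auto
    then show ?thesis
      by (simp add: sum.inter_filter[symmetric] of_bool_def)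
  qed
  have step: "of_bool (L ! i < L ! Suc i \<and> (\<exists>w\<in>X. z < w \<and> \<theta> (z, w) = (L ! i, L ! Suc i)))
      - of_bool (L ! Suc i < L ! i \<and> (\<exists>w\<in>X. z < w \<and> \<theta> (z, w) = (L ! Suc i, L ! i)))
      - (of_bool (L ! i < L ! Suc i \<and> (\<exists>w\<in>X. w < z \<and> \<theta> (w, z) = (L ! i, L ! Suc i)))
      - of_bool (L ! Suc i < L ! i \<and> (\<exists>w\<in>X. w < z \<and> \<theta> (w, z) = (L ! Suc i, L ! i))))
      = step_weight z (L ! i) (L ! Suc i)" if "i < ?m" for i
  proof -
    have "L ! i \<in> X" "L ! Suc i \<in> X"
      using assms(1) that by (auto simp: semiwalk_def)
    moreover have "L ! i < L ! Suc i \<or> L ! Suc i < L ! i"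
      using semiwalk_step[OF assms(1), of i] that by simp
    ultimately show ?thesis
      using preimage_starts_at_iff[OF _ assms(2)] preimage_ends_at_iff[OF _ assms(2)]
      by (auto simp: step_weight_def potential_def basis_def)
  qed
  have "int (s_plus X \<theta> L z) - int (s_minus X \<theta> L z) -
      (int (t_plus X \<theta> L z) - int (t_minus X \<theta> L z)) = edge_sum (step_weight z) L"
    unfolding s_plus_def s_minus_def t_plus_def t_minus_def card_eq edge_sum_conv_sum
      sum_subtractf[symmetric]
    by (intro sum.cong refl) (use step in auto)
  then show ?thesis
    unfolding balanced_at_def by linarith
qed

lemma admissible_imp_crown_balanced:
  assumes adm: "admissible X \<theta>" and crown: "weak_crown X xs ys" and z: "z \<in> X"
  shows "balanced_at X \<theta> (crown_list xs ys) z"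
proof -
  interpret chain_additive_weight X "step_weight z"
    by (rule chain_additive_step_weight)
  let ?L = "crown_list xs ys"
  have L: "semiwalk X ?L" "closed_walk ?L"
    using weak_crown_closed_semiwalk[OF crown] by auto
  obtain W where W: "walk X W" "hd W = hd ?L" "last W = last ?L"
    and sum: "edge_sum (step_weight z) W = edge_sum (step_weight z) ?L"
    using semiwalk_refines_to_walk[OF finite_X L(1)] by blast
  then have "closed_walk W"
    using L(2) by (simp add: closed_walk_def walk_iff_successively)
  then have "balanced_at X \<theta> W z"
    using adm W(1) z by (simp add: admissible_def)
  then have "edge_sum (step_weight z) W = 0"
    using balanced_at_iff_edge_sum[OF _ z] W(1) by (simp add: walk_def)
  then show ?thesis
    using balanced_at_iff_edge_sum[OF L(1) z] sum by simp
qed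

lemma crowns_balanced_imp_balanced:
  assumes crowns: "\<And>xs ys. weak_crown X xs ys \<Longrightarrow> balanced_at X \<theta> (crown_list xs ys) z"
    and L: "walk X L" "closed_walk L" and z: "z \<in> X"
  shows "balanced_at X \<theta> L z"
proof -
  interpret chain_additive_weight X "step_weight z"
    by (rule chain_additive_step_weight)
  have "semiwalk X L"
    using L(1) by (simp add: walk_def)
  moreover have "edge_sum (step_weight z) (crown_list xs ys) = 0" if "weak_crown X xs ys" for xs ys
    using crowns[OF that] balanced_at_iff_edge_sum[OF _ z] weak_crown_closed_semiwalk[OF that]
    by blast
  ultimately have "edge_sum (step_weight z) L = 0"
    using closed_semiwalk_edge_sum_zero L(2) by blast
  then show ?thesis
    using balanced_at_iff_edge_sum[OF \<open>semiwalk X L\<close> z] by simp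
qed

end

theorem lemma4p2:
  fixes X :: "'a::order set" and \<theta> :: "'a \<times> 'a \<Rightarrow> 'a \<times> 'a"
  assumes "finite X" and "poset_connected X" and "\<theta> \<in> M_set X"
  shows "\<theta> \<in> AM_set X \<longleftrightarrow>
    (\<forall>xs ys z. weak_crown X xs ys \<and> z \<in> X \<longrightarrow> balanced_at X \<theta> (crown_list xs ys) z)"
proof -
  interpret monotone_on_chains X \<theta>
    using assms(1,3) by unfold_locales
  have "admissible X \<theta> \<longleftrightarrow>
      (\<forall>xs ys z. weak_crown X xs ys \<and> z \<in> X \<longrightarrow> balanced_at X \<theta> (crown_list xs ys) z)"
    unfolding admissible_def
    using admissible_imp_crown_balanced[unfolded admissible_def] crowns_balanced_imp_balanced
    by blast
  then show ?thesis
    using assms(3) by (simp add: AM_set_def)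
qed

end
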